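(* Let $n \ge 1$ be an integer, let $Z = (z_1,\dots,z_n)^T \in \mathbb{R}^n$, let $r > 0$ and let $\epsilon \in (0,1)$. For a parameter $\lambda > 0$ define the two-SAF-layer network $y_\lambda:\mathbb{R}^n \to (0,1]$ by $$r_k(X) = \lambda (x_k - z_k),\quad s_k(X) = e^{-r_k(X)^2}\ (k=1,\dots,n),\quad t(X) = \sum_{k=1}^n s_k(X) - n,\quad y_\lambda(X) = e^{-t(X)^2},$$ for $X = (x_1,\dots,x_n)^T$. Let $\Omega = \{X \in \mathbb{R}^n : \lVert X - Z\rVert \le r\}$ (Euclidean norm), and for $\tau \in (0,1)$ let $\Omega'_{\lambda,\tau} = \{X \in \mathbb{R}^n : y_\lambda(X) \ge \tau\}$. Then there exist $\lambda > 0$ and $\tau \in (0,1)$ such that $$\frac{V(\Omega \cap \Omega'_{\lambda,\tau})}{V(\Omega \cup \Omega'_{\lambda,\tau})} \ge 1 - \epsilon,$$ where $V$ denotes $n$-dimensional Lebesgue measure.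
   Context: This formalizes the statement that a network consisting of two layers of the one-dimensional radial basis function $\sigma(u) = e^{-u^2}$ (a "symmetric activation function"), with an affine layer before each, can decide membership of a sample $X$ in the closed Euclidean ball of radius $r$ centred at $Z$ with arbitrarily small error, the decision being "$X$ is in the ball iff $y_\lambda(X) \ge \tau$", and the error being measured by one minus the ratio of the volume of the intersection to the volume of the union of the true ball and the accepted region. *)

theory Defs
  imports "HOL-Analysis.Analysis"
begin

definition saf_net :: "real \<Rightarrow> real ^ 'n \<Rightarrow> real ^ 'n \<Rightarrow> real" where
  "saf_net lam Z X =
     (let t = (\<Sum>k\<in>UNIV. exp (- (lam * (X $ k - Z $ k))\<^sup>2)) - real CARD('n)
      in exp (- t\<^sup>2))"

end

theory Submission
  imports Defs
begin

text \<open>Put \<open>v = \<lambda>(X - Z)\<close> and \<open>F v = (\<Sum>k. 1 - exp (- v\<^sub>k\<^sup>2))\<close>. Then \<open>t = - F v\<close>, so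
  \<open>y\<^sub>\<lambda> X = exp (- (F v)\<^sup>2)\<close> and \<open>y\<^sub>\<lambda> X \<ge> exp (- c\<^sup>2)\<close> iff \<open>F v \<le> c\<close>. The elementary bounds
  \<open>u / (1 + u) \<le> 1 - exp (- u) \<le> u\<close> give \<open>|v|\<^sup>2 / (1 + |v|\<^sup>2) \<le> F v \<le> |v|\<^sup>2\<close>, so the
  accepted region lies between the balls of radii \<open>\<surd>c / \<lambda>\<close> and \<open>\<surd>(c / (1 - c)) / \<lambda>\<close>.
  Choosing \<open>\<lambda>\<close> so that the outer ball is \<open>\<Omega>\<close>, the accepted region lies inside \<open>\<Omega>\<close> and the
  volume ratio is at least \<open>(1 - c)\<^sup>n\<^sup>/\<^sup>2 \<ge> 1 - n c = 1 - \<epsilon>\<close> for \<open>c = \<epsilon> / n\<close>.\<close>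

lemma one_minus_exp_minus_le: "1 - exp (- x) \<le> (x::real)"
  using exp_ge_add_one_self[of "- x"] by linarith

lemma divide_one_plus_le_one_minus_exp_minus:
  assumes "0 \<le> x"
  shows "x / (1 + x) \<le> 1 - exp (- (x::real))"
proof -
  have "exp (- x) = inverse (exp x)" by (simp add: exp_minus)
  also have "\<dots> \<le> inverse (1 + x)"
    using exp_ge_add_one_self[of x] assms by (intro le_imp_inverse_le) auto
  finally show ?thesis using assms by (simp add: field_simps)
qed

lemma power2_norm_vec: "(norm (v::real^'n))\<^sup>2 = (\<Sum>k\<in>UNIV. (v$k)\<^sup>2)"
  by (simp add: norm_vec_def L2_set_def sum_nonneg)

definition gauss_defect :: "real^'n \<Rightarrow> real" where
  "gauss_defect v = (\<Sum>k\<in>UNIV. 1 - exp (- (v$k)\<^sup>2))"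

lemma gauss_defect_nonneg: "0 \<le> gauss_defect v"
  unfolding gauss_defect_def by (intro sum_nonneg) simp

lemma gauss_defect_le_power2_norm: "gauss_defect v \<le> (norm v)\<^sup>2"
  unfolding gauss_defect_def power2_norm_vec by (intro sum_mono one_minus_exp_minus_le)

lemma power2_norm_divide_le_gauss_defect:
  "(norm v)\<^sup>2 / (1 + (norm v)\<^sup>2) \<le> gauss_defect v"
proof -
  define S where "S = (norm v)\<^sup>2"
  have "S / (1 + S) = (\<Sum>k\<in>UNIV. (v$k)\<^sup>2 / (1 + S))"
    unfolding S_def power2_norm_vec by (simp add: sum_divide_distrib)
  also have "\<dots> \<le> (\<Sum>k\<in>UNIV. 1 - exp (- (v$k)\<^sup>2))"
  proof (intro sum_mono)
    fix k
    have "(v$k)\<^sup>2 \<le> S" unfolding S_def power2_norm_vec by (rule member_le_sum) auto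
    then have "(v$k)\<^sup>2 / (1 + S) \<le> (v$k)\<^sup>2 / (1 + (v$k)\<^sup>2)"
      by (intro divide_left_mono mult_pos_pos) (auto simp: S_def intro: add_pos_nonneg)
    also have "\<dots> \<le> 1 - exp (- (v$k)\<^sup>2)"
      by (rule divide_one_plus_le_one_minus_exp_minus) simp
    finally show "(v$k)\<^sup>2 / (1 + S) \<le> 1 - exp (- (v$k)\<^sup>2)" .
  qed
  finally show ?thesis unfolding S_def gauss_defect_def .
qed

lemma power2_norm_le_if_gauss_defect_le:
  assumes "gauss_defect v \<le> c" "c < 1"
  shows "(norm v)\<^sup>2 \<le> c / (1 - c)"
proof -
  define S where "S = (norm v)\<^sup>2"
  have "S / (1 + S) \<le> c"
    using power2_norm_divide_le_gauss_defect[of v] assms(1) unfolding S_def by linarith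
  then have "S * (1 - c) \<le> c"
    by (simp add: S_def field_simps add_pos_nonneg)
  then show ?thesis using assms(2) unfolding S_def by (simp add: field_simps)
qed

lemma saf_net_eq_gauss_defect:
  fixes Z X :: "real^'n"
  shows "saf_net lam Z X = exp (- (gauss_defect (lam *\<^sub>R (X - Z)))\<^sup>2)"
proof -
  have "(\<Sum>k\<in>UNIV. exp (- (lam * (X$k - Z$k))\<^sup>2)) - real CARD('n)
          = - gauss_defect (lam *\<^sub>R (X - Z))"
    unfolding gauss_defect_def by (simp add: sum_subtractf)
  then show ?thesis unfolding saf_net_def Let_def by simp
qed

lemma exp_minus_power2_le_saf_net_iff:
  fixes Z X :: "real^'n"
  assumes "0 \<le> c"
  shows "exp (- c\<^sup>2) \<le> saf_net lam Z X \<longleftrightarrow> gauss_defect (lam *\<^sub>R (X - Z)) \<le> c"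
  using assms gauss_defect_nonneg[of "lam *\<^sub>R (X - Z)"]
  by (simp add: saf_net_eq_gauss_defect power2_le_iff_abs_le)

lemma norm_scaleR_diff: "0 \<le> lam \<Longrightarrow> norm (lam *\<^sub>R (X - Z)) = lam * dist Z X"
  by (simp add: dist_norm norm_minus_commute)

lemma gauss_defect_sublevel_between_cballs:
  fixes Z :: "real^'n"
  assumes "0 < lam" "0 \<le> c" "c < 1"
  shows "cball Z (sqrt c / lam) \<subseteq> {X. gauss_defect (lam *\<^sub>R (X - Z)) \<le> c}"
    and "{X. gauss_defect (lam *\<^sub>R (X - Z)) \<le> c} \<subseteq> cball Z (sqrt (c / (1 - c)) / lam)"
proof safe
  fix X assume "X \<in> cball Z (sqrt c / lam)"
  then have "norm (lam *\<^sub>R (X - Z)) \<le> sqrt c"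
    using assms(1) by (simp only: norm_scaleR_diff less_imp_le) (simp add: field_simps)
  then have "(norm (lam *\<^sub>R (X - Z)))\<^sup>2 \<le> c"
    using assms(2) by (metis norm_ge_zero power_mono real_sqrt_pow2)
  then show "gauss_defect (lam *\<^sub>R (X - Z)) \<le> c"
    using gauss_defect_le_power2_norm order_trans by blast
next
  fix X assume "gauss_defect (lam *\<^sub>R (X - Z)) \<le> c"
  then have "(norm (lam *\<^sub>R (X - Z)))\<^sup>2 \<le> c / (1 - c)"
    using assms(3) by (rule power2_norm_le_if_gauss_defect_le)
  then have "norm (lam *\<^sub>R (X - Z)) \<le> sqrt (c / (1 - c))"
    using real_le_rsqrt by blast
  then show "X \<in> cball Z (sqrt (c / (1 - c)) / lam)"
    using assms(1) by (simp only: norm_scaleR_diff less_imp_le) (simp add: field_simps)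
qed

lemma measure_ratio_ge_between_cballs:
  fixes Z :: "'a::euclidean_space"
  assumes "closed A" "cball Z \<rho> \<subseteq> A" "A \<subseteq> cball Z r" "0 \<le> \<rho>" "0 < r"
  shows "(\<rho> / r) ^ DIM('a) \<le> measure lborel A / measure lborel (cball Z r)"
proof -
  have "A \<in> fmeasurable lborel"
    using assms(1,3) by (intro fmeasurableI2[OF fmeasurable_compact[of "cball Z r"]]) auto
  then have "measure lborel (cball Z \<rho>) \<le> measure lborel A"
    using assms(2) by (intro measure_mono_fmeasurable) auto
  moreover have "0 < measure lborel (cball Z r)"
    using assms(5) by simp
  ultimately have "measure lborel (cball Z \<rho>) / measure lborel (cball Z r)
                     \<le> measure lborel A / measure lborel (cball Z r)"
    by (simp add: divide_right_mono)
  moreover have "measure lborel (cball Z \<rho>) / measure lborel (cball Z r) = (\<rho> / r) ^ DIM('a)"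
    using assms(4,5) by (simp add: content_cball power_divide less_imp_neq[symmetric])
  ultimately show ?thesis by simp
qed

lemma one_minus_mult_le_sqrt_one_minus_power:
  assumes "0 \<le> c" "c \<le> 1"
  shows "1 - real n * c \<le> sqrt (1 - c) ^ n"
proof -
  have "1 - real n * c \<le> (1 - c) ^ n"
    using Bernoulli_inequality[of "- c" n] assms by simp
  also have "\<dots> \<le> sqrt (1 - c) ^ n"
    using assms by (intro power_mono real_le_rsqrt) (auto simp: power2_eq_square intro: mult_left_le)
  finally show ?thesis .
qed

theorem lemma1:
  fixes Z :: "real ^ 'n" and r \<epsilon> :: real
  assumes "r > 0" and "0 < \<epsilon>" and "\<epsilon> < 1"
  shows "\<exists>lam \<tau>. lam > 0 \<and> 0 < \<tau> \<and> \<tau> < 1 \<and>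
    (let \<Omega> = cball Z r; \<Omega>' = {X. saf_net lam Z X \<ge> \<tau>}
     in measure lborel (\<Omega> \<inter> \<Omega>') / measure lborel (\<Omega> \<union> \<Omega>') \<ge> 1 - \<epsilon>)"
proof -
  define c where "c = \<epsilon> / CARD('n)"
  have "\<epsilon> < CARD('n)"
    using assms(3) by (simp add: less_le_trans)
  then have c: "0 < c" "c < 1" "CARD('n) * c = \<epsilon>"
    using assms(2) by (auto simp: c_def field_simps)
  define lam where "lam = sqrt (c / (1 - c)) / r"
  have lam: "0 < lam" "sqrt (c / (1 - c)) / lam = r" "sqrt c / lam = r * sqrt (1 - c)"
    using c assms by (auto simp: lam_def real_sqrt_divide)
  define \<Omega>' where "\<Omega>' = {X. saf_net lam Z X \<ge> exp (- c\<^sup>2)}"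
  have "\<Omega>' = {X. gauss_defect (lam *\<^sub>R (X - Z)) \<le> c}"
    unfolding \<Omega>'_def using exp_minus_power2_le_saf_net_iff[of c lam Z] c(1) by simp
  then have between: "cball Z (r * sqrt (1 - c)) \<subseteq> \<Omega>'" "\<Omega>' \<subseteq> cball Z r"
    using gauss_defect_sublevel_between_cballs[OF lam(1), of c Z] c lam by auto
  have "closed \<Omega>'"
    unfolding \<Omega>'_def saf_net_def Let_def by (intro closed_Collect_le continuous_intros)
  have "1 - \<epsilon> \<le> sqrt (1 - c) ^ CARD('n)"
    using one_minus_mult_le_sqrt_one_minus_power[of c] c by auto
  also have "\<dots> \<le> measure lborel \<Omega>' / measure lborel (cball Z r)"
    using measure_ratio_ge_between_cballs[OF \<open>closed \<Omega>'\<close> between] c assms by simp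
  also have "\<dots> = measure lborel (cball Z r \<inter> \<Omega>') / measure lborel (cball Z r \<union> \<Omega>')"
    using between(2) by (simp add: Int_absorb1 Un_absorb2)
  finally have "1 - \<epsilon> \<le> \<dots>" .
  moreover have "0 < exp (- c\<^sup>2)" "exp (- c\<^sup>2) < 1"
    using c(1) by auto
  ultimately show ?thesis
    using lam(1) unfolding \<Omega>'_def Let_def by (intro exI[of _ lam] exI[of _ "exp (- c\<^sup>2)"]) simp
qed

end
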